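(* Let $\mathbf Z$ be the full subcategory of monoidal categories that are monoidally equivalent to the terminal monoidal category $\mathbf 1$ (equivalently, monoidal categories in which between any two objects there is exactly one morphism). Then $\mathbf Z$ is a reflective and coreflective subcategory both of the category $\mathbf{MC}$ of small monoidal categories and strong monoidal functors, and of the category $\mathbf{SMC}$ of small symmetric monoidal categories and symmetric strong monoidal functors. For every monoidal category $\mathcal M$, the functor $\eta_{\mathcal M}\colon\mathcal M\to R(\mathcal M)$ is the reflection of $\mathcal M$ into $\mathbf Z$ and the functor $\epsilon_{\mathcal M}\colon S(\mathcal M)\to\mathcal M$ is the coreflection of $\mathcal M$ into $\mathbf Z$.
   Context: Let $(\mathcal M,\otimes,I,a,\ell,r)$ be a monoidal category. $R(\mathcal M)$ is the monoidal category with the same objects as $\mathcal M$, exactly one morphism between any two objects, tensor product on objects as in $\mathcal M$ and unit $I$; $\eta_{\mathcal M}\colon\mathcal M\to R(\mathcal M)$ is the unique functor which is the identity on objects (it is strong monoidal, and symmetric when $\mathcal M$ is symmetric). $S(\mathcal M)$ is the monoidal category whose objects are pairs $(X,x)$ with $X$ an object of $\mathcal M$ and $x\colon X\to I$ an isomorphism; a morphism $(X,x)\to(Y,y)$ is a morphism $f\colon X\to Y$ of $\mathcal M$ with $y\circ f=x$ (so it is uniquely $y^{-1}x$); composition and identities as in $\mathcal M$; $(X,x)\otimes(Y,y)=(X\otimes Y,\ \ell_I\circ(x\otimes y))$ where $\ell_I=r_I\colon I\otimes I\to I$; tensor of morphisms as in $\mathcal M$; unit $(I,\mathrm{id}_I)$;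 associators and unitors as in $\mathcal M$. $\epsilon_{\mathcal M}\colon S(\mathcal M)\to\mathcal M$ sends $(X,x)\mapsto X$ and $f\mapsto f$ (strong monoidal, symmetric when $\mathcal M$ is symmetric). All categories are regarded as 1-categories. *)

theory Defs
  imports Main
begin

record ('o,'a) mcat =
  mOb   :: "'o set"
  mAr   :: "'a set"
  mDom  :: "'a \<Rightarrow> 'o"
  mCod  :: "'a \<Rightarrow> 'o"
  mId   :: "'o \<Rightarrow> 'a"
  mComp :: "'a \<Rightarrow> 'a \<Rightarrow> 'a"   (* mComp g f = g o f *)
  mTen  :: "'o \<Rightarrow> 'o \<Rightarrow> 'o"
  mTenA :: "'a \<Rightarrow> 'a \<Rightarrow> 'a"
  mUnit :: "'o"
  mAssoc :: "'o \<Rightarrow> 'o \<Rightarrow> 'o \<Rightarrow> 'a"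
  mLu   :: "'o \<Rightarrow> 'a"
  mRu   :: "'o \<Rightarrow> 'a"

definition hom :: "('o,'a) mcat \<Rightarrow> 'o \<Rightarrow> 'o \<Rightarrow> 'a set" where
  "hom C X Y = {f \<in> mAr C. mDom C f = X \<and> mCod C f = Y}"

definition category :: "('o,'a) mcat \<Rightarrow> bool" where
  "category C \<longleftrightarrow>
     (\<forall>f\<in>mAr C. mDom C f \<in> mOb C \<and> mCod C f \<in> mOb C) \<and>
     (\<forall>X\<in>mOb C. mId C X \<in> hom C X X) \<and>
     (\<forall>f\<in>mAr C. \<forall>g\<in>mAr C. mCod C f = mDom C g \<longrightarrow>
         mComp C g f \<in> hom C (mDom C f) (mCod C g)) \<and>
     (\<forall>f\<in>mAr C. mComp C f (mId C (mDom C f)) = f \<and> mComp C (mId C (mCod C f)) f = f) \<and>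
     (\<forall>f\<in>mAr C. \<forall>g\<in>mAr C. \<forall>h\<in>mAr C. mCod C f = mDom C g \<longrightarrow> mCod C g = mDom C h \<longrightarrow>
         mComp C h (mComp C g f) = mComp C (mComp C h g) f)"

definition iso :: "('o,'a) mcat \<Rightarrow> 'a \<Rightarrow> bool" where
  "iso C f \<longleftrightarrow> f \<in> mAr C \<and>
     (\<exists>g\<in>hom C (mCod C f) (mDom C f).
        mComp C g f = mId C (mDom C f) \<and> mComp C f g = mId C (mCod C f))"

definition monoidal :: "('o,'a) mcat \<Rightarrow> bool" where
  "monoidal C \<longleftrightarrow> category C \<and>
     mUnit C \<in> mOb C \<and>
     (\<forall>X\<in>mOb C. \<forall>Y\<in>mOb C. mTen C X Y \<in> mOb C) \<and>
     (\<forall>f\<in>mAr C. \<forall>g\<in>mAr C. mTenA C f g \<in>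
         hom C (mTen C (mDom C f) (mDom C g)) (mTen C (mCod C f) (mCod C g))) \<and>
     (\<forall>X\<in>mOb C. \<forall>Y\<in>mOb C. mTenA C (mId C X) (mId C Y) = mId C (mTen C X Y)) \<and>
     (\<forall>f\<in>mAr C. \<forall>f'\<in>mAr C. \<forall>g\<in>mAr C. \<forall>g'\<in>mAr C.
         mCod C f = mDom C f' \<longrightarrow> mCod C g = mDom C g' \<longrightarrow>
         mTenA C (mComp C f' f) (mComp C g' g) = mComp C (mTenA C f' g') (mTenA C f g)) \<and>
     (\<forall>X\<in>mOb C. \<forall>Y\<in>mOb C. \<forall>Z\<in>mOb C.
         mAssoc C X Y Z \<in> hom C (mTen C (mTen C X Y) Z) (mTen C X (mTen C Y Z)) \<and>
         iso C (mAssoc C X Y Z)) \<and>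
     (\<forall>X\<in>mOb C. mLu C X \<in> hom C (mTen C (mUnit C) X) X \<and> iso C (mLu C X)) \<and>
     (\<forall>X\<in>mOb C. mRu C X \<in> hom C (mTen C X (mUnit C)) X \<and> iso C (mRu C X)) \<and>
     (\<forall>f\<in>mAr C. \<forall>g\<in>mAr C. \<forall>h\<in>mAr C.
         mComp C (mAssoc C (mCod C f) (mCod C g) (mCod C h)) (mTenA C (mTenA C f g) h) =
         mComp C (mTenA C f (mTenA C g h)) (mAssoc C (mDom C f) (mDom C g) (mDom C h))) \<and>
     (\<forall>f\<in>mAr C. mComp C (mLu C (mCod C f)) (mTenA C (mId C (mUnit C)) f) =
                 mComp C f (mLu C (mDom C f))) \<and>
     (\<forall>f\<in>mAr C. mComp C (mRu C (mCod C f)) (mTenA C f (mId C (mUnit C))) =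
                 mComp C f (mRu C (mDom C f))) \<and>
     (\<forall>W\<in>mOb C. \<forall>X\<in>mOb C. \<forall>Y\<in>mOb C. \<forall>Z\<in>mOb C.
         mComp C (mAssoc C W X (mTen C Y Z)) (mAssoc C (mTen C W X) Y Z) =
         mComp C (mTenA C (mId C W) (mAssoc C X Y Z))
           (mComp C (mAssoc C W (mTen C X Y) Z) (mTenA C (mAssoc C W X Y) (mId C Z)))) \<and>
     (\<forall>X\<in>mOb C. \<forall>Y\<in>mOb C.
         mComp C (mTenA C (mId C X) (mLu C Y)) (mAssoc C X (mUnit C) Y) =
         mTenA C (mRu C X) (mId C Y))"

definition symmetric :: "('o,'a) mcat \<Rightarrow> ('o \<Rightarrow> 'o \<Rightarrow> 'a) \<Rightarrow> bool" where
  "symmetric C s \<longleftrightarrow> monoidal C \<and>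
     (\<forall>X\<in>mOb C. \<forall>Y\<in>mOb C. s X Y \<in> hom C (mTen C X Y) (mTen C Y X)) \<and>
     (\<forall>f\<in>mAr C. \<forall>g\<in>mAr C.
         mComp C (s (mCod C f) (mCod C g)) (mTenA C f g) =
         mComp C (mTenA C g f) (s (mDom C f) (mDom C g))) \<and>
     (\<forall>X\<in>mOb C. \<forall>Y\<in>mOb C. mComp C (s Y X) (s X Y) = mId C (mTen C X Y)) \<and>
     (\<forall>X\<in>mOb C. \<forall>Y\<in>mOb C. \<forall>Z\<in>mOb C.
         mComp C (mAssoc C Y Z X) (mComp C (s X (mTen C Y Z)) (mAssoc C X Y Z)) =
         mComp C (mTenA C (mId C Y) (s X Z))
           (mComp C (mAssoc C Y X Z) (mTenA C (s X Y) (mId C Z))))"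

record ('o,'a,'p,'b) smf =
  fO    :: "'o \<Rightarrow> 'p"
  fA    :: "'a \<Rightarrow> 'b"
  fPhi  :: "'o \<Rightarrow> 'o \<Rightarrow> 'b"
  fPhi0 :: "'b"

definition is_functor :: "('o,'a) mcat \<Rightarrow> ('p,'b) mcat \<Rightarrow> ('o,'a,'p,'b) smf \<Rightarrow> bool" where
  "is_functor C D F \<longleftrightarrow>
     (\<forall>X\<in>mOb C. fO F X \<in> mOb D \<and> fA F (mId C X) = mId D (fO F X)) \<and>
     (\<forall>f\<in>mAr C. fA F f \<in> hom D (fO F (mDom C f)) (fO F (mCod C f))) \<and>
     (\<forall>f\<in>mAr C. \<forall>g\<in>mAr C. mCod C f = mDom C g \<longrightarrow>
         fA F (mComp C g f) = mComp D (fA F g) (fA F f))"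

definition strong_monoidal :: "('o,'a) mcat \<Rightarrow> ('p,'b) mcat \<Rightarrow> ('o,'a,'p,'b) smf \<Rightarrow> bool" where
  "strong_monoidal C D F \<longleftrightarrow> monoidal C \<and> monoidal D \<and> is_functor C D F \<and>
     fPhi0 F \<in> hom D (mUnit D) (fO F (mUnit C)) \<and> iso D (fPhi0 F) \<and>
     (\<forall>X\<in>mOb C. \<forall>Y\<in>mOb C.
         fPhi F X Y \<in> hom D (mTen D (fO F X) (fO F Y)) (fO F (mTen C X Y)) \<and>
         iso D (fPhi F X Y)) \<and>
     (\<forall>f\<in>mAr C. \<forall>g\<in>mAr C.
         mComp D (fPhi F (mCod C f) (mCod C g)) (mTenA D (fA F f) (fA F g)) =
         mComp D (fA F (mTenA C f g)) (fPhi F (mDom C f) (mDom C g))) \<and>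
     (\<forall>X\<in>mOb C. \<forall>Y\<in>mOb C. \<forall>Z\<in>mOb C.
         mComp D (fA F (mAssoc C X Y Z))
           (mComp D (fPhi F (mTen C X Y) Z) (mTenA D (fPhi F X Y) (mId D (fO F Z)))) =
         mComp D (fPhi F X (mTen C Y Z))
           (mComp D (mTenA D (mId D (fO F X)) (fPhi F Y Z))
              (mAssoc D (fO F X) (fO F Y) (fO F Z)))) \<and>
     (\<forall>X\<in>mOb C.
         mLu D (fO F X) =
         mComp D (fA F (mLu C X))
           (mComp D (fPhi F (mUnit C) X) (mTenA D (fPhi0 F) (mId D (fO F X))))) \<and>
     (\<forall>X\<in>mOb C.
         mRu D (fO F X) =
         mComp D (fA F (mRu C X))
           (mComp D (fPhi F X (mUnit C)) (mTenA D (mId D (fO F X)) (fPhi0 F))))"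

definition symmetric_strong_monoidal ::
  "('o,'a) mcat \<Rightarrow> ('o \<Rightarrow> 'o \<Rightarrow> 'a) \<Rightarrow> ('p,'b) mcat \<Rightarrow> ('p \<Rightarrow> 'p \<Rightarrow> 'b)
     \<Rightarrow> ('o,'a,'p,'b) smf \<Rightarrow> bool" where
  "symmetric_strong_monoidal C s D t F \<longleftrightarrow>
     symmetric C s \<and> symmetric D t \<and> strong_monoidal C D F \<and>
     (\<forall>X\<in>mOb C. \<forall>Y\<in>mOb C.
        mComp D (fA F (s X Y)) (fPhi F X Y) = mComp D (fPhi F Y X) (t (fO F X) (fO F Y)))"

definition smf_comp :: "('q,'c) mcat \<Rightarrow> ('p,'b,'q,'c) smf \<Rightarrow> ('o,'a,'p,'b) smf \<Rightarrow> ('o,'a,'q,'c) smf" where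
  "smf_comp E G F =
     \<lparr> fO = (\<lambda>X. fO G (fO F X)), fA = (\<lambda>f. fA G (fA F f)),
       fPhi = (\<lambda>X Y. mComp E (fA G (fPhi F X Y)) (fPhi G (fO F X) (fO F Y))),
       fPhi0 = mComp E (fA G (fPhi0 F)) (fPhi0 G) \<rparr>"

definition smf_eq :: "('o,'a) mcat \<Rightarrow> ('o,'a,'p,'b) smf \<Rightarrow> ('o,'a,'p,'b) smf \<Rightarrow> bool" where
  "smf_eq C F G \<longleftrightarrow>
     (\<forall>X\<in>mOb C. fO F X = fO G X) \<and> (\<forall>f\<in>mAr C. fA F f = fA G f) \<and>
     (\<forall>X\<in>mOb C. \<forall>Y\<in>mOb C. fPhi F X Y = fPhi G X Y) \<and> fPhi0 F = fPhi0 G"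

definition in_Z :: "('o,'a) mcat \<Rightarrow> bool" where
  "in_Z C \<longleftrightarrow> monoidal C \<and> (\<forall>X\<in>mOb C. \<forall>Y\<in>mOb C. \<exists>!f. f \<in> hom C X Y)"

definition R :: "('o,'a) mcat \<Rightarrow> ('o, 'o \<times> 'o) mcat" where
  "R M = \<lparr> mOb = mOb M, mAr = mOb M \<times> mOb M, mDom = fst, mCod = snd,
     mId = (\<lambda>X. (X, X)), mComp = (\<lambda>g f. (fst f, snd g)),
     mTen = mTen M, mTenA = (\<lambda>f g. (mTen M (fst f) (fst g), mTen M (snd f) (snd g))),
     mUnit = mUnit M,
     mAssoc = (\<lambda>X Y Z. (mTen M (mTen M X Y) Z, mTen M X (mTen M Y Z))),
     mLu = (\<lambda>X. (mTen M (mUnit M) X, X)), mRu = (\<lambda>X. (mTen M X (mUnit M), X)) \<rparr>"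

definition Rsym :: "('o,'a) mcat \<Rightarrow> 'o \<Rightarrow> 'o \<Rightarrow> 'o \<times> 'o" where
  "Rsym M X Y = (mTen M X Y, mTen M Y X)"

definition eta :: "('o,'a) mcat \<Rightarrow> ('o,'a,'o,'o \<times> 'o) smf" where
  "eta M = \<lparr> fO = (\<lambda>X. X), fA = (\<lambda>f. (mDom M f, mCod M f)),
     fPhi = (\<lambda>X Y. (mTen M X Y, mTen M X Y)), fPhi0 = (mUnit M, mUnit M) \<rparr>"

text \<open>Objects (X,x) with x : X -> I an isomorphism; a morphism (X,x) -> (Y,y) is
  encoded as the triple ((X,x), f, (Y,y)) with y o f = x.\<close>
definition S_ob :: "('o,'a) mcat \<Rightarrow> ('o \<times> 'a) set" where
  "S_ob M = {(X, x). X \<in> mOb M \<and> x \<in> hom M X (mUnit M) \<and> iso M x}"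

definition S :: "('o,'a) mcat \<Rightarrow> ('o \<times> 'a, ('o \<times> 'a) \<times> 'a \<times> ('o \<times> 'a)) mcat" where
  "S M = (let tO = (\<lambda>A B. (mTen M (fst A) (fst B),
                         mComp M (mLu M (mUnit M)) (mTenA M (snd A) (snd B)))) in
     \<lparr> mOb = S_ob M,
       mAr = {(A, f, B). A \<in> S_ob M \<and> B \<in> S_ob M \<and> f \<in> hom M (fst A) (fst B) \<and>
                          mComp M (snd B) f = snd A},
       mDom = fst, mCod = (\<lambda>u. snd (snd u)),
       mId = (\<lambda>A. (A, mId M (fst A), A)),
       mComp = (\<lambda>g f. (fst f, mComp M (fst (snd g)) (fst (snd f)), snd (snd g))),
       mTen = tO,
       mTenA = (\<lambda>f g. (tO (fst f) (fst g), mTenA M (fst (snd f)) (fst (snd g)),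
                        tO (snd (snd f)) (snd (snd g)))),
       mUnit = (mUnit M, mId M (mUnit M)),
       mAssoc = (\<lambda>A B C. (tO (tO A B) C, mAssoc M (fst A) (fst B) (fst C), tO A (tO B C))),
       mLu = (\<lambda>A. (tO (mUnit M, mId M (mUnit M)) A, mLu M (fst A), A)),
       mRu = (\<lambda>A. (tO A (mUnit M, mId M (mUnit M)), mRu M (fst A), A)) \<rparr>)"

definition Ssym :: "('o,'a) mcat \<Rightarrow> ('o \<Rightarrow> 'o \<Rightarrow> 'a)
    \<Rightarrow> 'o \<times> 'a \<Rightarrow> 'o \<times> 'a \<Rightarrow> ('o \<times> 'a) \<times> 'a \<times> ('o \<times> 'a)" where
  "Ssym M s A B = (mTen (S M) A B, s (fst A) (fst B), mTen (S M) B A)"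

definition eps :: "('o,'a) mcat \<Rightarrow> ('o \<times> 'a, ('o \<times> 'a) \<times> 'a \<times> ('o \<times> 'a), 'o, 'a) smf" where
  "eps M = \<lparr> fO = fst, fA = (\<lambda>u. fst (snd u)),
     fPhi = (\<lambda>A B. mId M (mTen M (fst A) (fst B))), fPhi0 = mId M (mUnit M) \<rparr>"

text \<open>Reflection of M into Z along e : M -> RM, in MC, tested against one N and F.\<close>
definition refl_univ :: "('o,'a) mcat \<Rightarrow> ('r,'s) mcat \<Rightarrow> ('o,'a,'r,'s) smf
    \<Rightarrow> ('p,'b) mcat \<Rightarrow> ('o,'a,'p,'b) smf \<Rightarrow> bool" where
  "refl_univ M RM e N F \<longleftrightarrow> (in_Z N \<and> strong_monoidal M N F \<longrightarrow>
     (\<exists>G. strong_monoidal RM N G \<and> smf_eq M (smf_comp N G e) F) \<and>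
     (\<forall>G G'. strong_monoidal RM N G \<and> smf_eq M (smf_comp N G e) F \<and>
             strong_monoidal RM N G' \<and> smf_eq M (smf_comp N G' e) F \<longrightarrow> smf_eq RM G G'))"

definition sym_refl_univ :: "('o,'a) mcat \<Rightarrow> ('r,'s) mcat \<Rightarrow> ('r \<Rightarrow> 'r \<Rightarrow> 's)
    \<Rightarrow> ('o,'a,'r,'s) smf \<Rightarrow> ('o \<Rightarrow> 'o \<Rightarrow> 'a)
    \<Rightarrow> ('p,'b) mcat \<Rightarrow> ('p \<Rightarrow> 'p \<Rightarrow> 'b) \<Rightarrow> ('o,'a,'p,'b) smf \<Rightarrow> bool" where
  "sym_refl_univ M RM r e s N t F \<longleftrightarrow> (in_Z N \<and> symmetric_strong_monoidal M s N t F \<longrightarrow>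
     (\<exists>G. symmetric_strong_monoidal RM r N t G \<and> smf_eq M (smf_comp N G e) F) \<and>
     (\<forall>G G'. symmetric_strong_monoidal RM r N t G \<and> smf_eq M (smf_comp N G e) F \<and>
             symmetric_strong_monoidal RM r N t G' \<and> smf_eq M (smf_comp N G' e) F
             \<longrightarrow> smf_eq RM G G'))"

text \<open>Coreflection of M into Z along e : SM -> M, tested against one N and F : N -> M.\<close>
definition corefl_univ :: "('o,'a) mcat \<Rightarrow> ('r,'s) mcat \<Rightarrow> ('r,'s,'o,'a) smf
    \<Rightarrow> ('p,'b) mcat \<Rightarrow> ('p,'b,'o,'a) smf \<Rightarrow> bool" where
  "corefl_univ M SM e N F \<longleftrightarrow> (in_Z N \<and> strong_monoidal N M F \<longrightarrow>
     (\<exists>G. strong_monoidal N SM G \<and> smf_eq N (smf_comp M e G) F) \<and>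
     (\<forall>G G'. strong_monoidal N SM G \<and> smf_eq N (smf_comp M e G) F \<and>
             strong_monoidal N SM G' \<and> smf_eq N (smf_comp M e G') F \<longrightarrow> smf_eq N G G'))"

definition sym_corefl_univ :: "('o,'a) mcat \<Rightarrow> ('r,'s) mcat \<Rightarrow> ('r \<Rightarrow> 'r \<Rightarrow> 's)
    \<Rightarrow> ('r,'s,'o,'a) smf \<Rightarrow> ('o \<Rightarrow> 'o \<Rightarrow> 'a)
    \<Rightarrow> ('p,'b) mcat \<Rightarrow> ('p \<Rightarrow> 'p \<Rightarrow> 'b) \<Rightarrow> ('p,'b,'o,'a) smf \<Rightarrow> bool" where
  "sym_corefl_univ M SM r e s N t F \<longleftrightarrow> (in_Z N \<and> symmetric_strong_monoidal N t M s F \<longrightarrow>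
     (\<exists>G. symmetric_strong_monoidal N t SM r G \<and> smf_eq N (smf_comp M e G) F) \<and>
     (\<forall>G G'. symmetric_strong_monoidal N t SM r G \<and> smf_eq N (smf_comp M e G) F \<and>
             symmetric_strong_monoidal N t SM r G' \<and> smf_eq N (smf_comp M e G') F
             \<longrightarrow> smf_eq N G G'))"

end

theory Submission
  imports Defs
begin

(* R(M) and S(M) are indiscrete: R(M) by construction, S(M) because a morphism
   (X, x) -> (Y, y) must be y^-1 o x. In an indiscrete category every diagram commutes,
   so a strong monoidal functor into one is just an object map with constraints of the
   right type, and any symmetry condition on it holds automatically.

   Reflection: eta is the identity on objects, so a strong monoidal F : M -> N into an
   indiscrete N extends uniquely to R(M), keeping the objects and constraints of F.

   Coreflection: a strong monoidal F : N -> M out of an indiscrete N lifts through eps by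
   X |-> (F X, phi0^-1 o F(u_X)), with u_X the unique arrow X -> I; this choice is forced by
   the unit constraint of the lift. The tensor of S(M) uses lambda_I : I (x) I -> I, and its
   associativity, unit laws and symmetry come down to Kelly's identity lambda_I = rho_I and,
   in the symmetric case, to lambda_I o s_{I,I} = lambda_I. *)

section \<open>Monoidal categories\<close>

locale small_category =
  fixes C :: "('o,'a) mcat"
  assumes category: "category C"
begin

abbreviation Ob where "Ob \<equiv> mOb C"
abbreviation Ar where "Ar \<equiv> mAr C"
abbreviation src where "src f \<equiv> mDom C f"
abbreviation trg where "trg f \<equiv> mCod C f"
abbreviation idm where "idm X \<equiv> mId C X"
abbreviation comp (infixr "\<cdot>" 55) where "g \<cdot> f \<equiv> mComp C g f"

lemma src_in_Ob [simp]: "f \<in> Ar \<Longrightarrow> src f \<in> Ob"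
  and trg_in_Ob [simp]: "f \<in> Ar \<Longrightarrow> trg f \<in> Ob"
  and idm_in_Ar [simp]: "X \<in> Ob \<Longrightarrow> idm X \<in> Ar"
  and src_idm [simp]: "X \<in> Ob \<Longrightarrow> src (idm X) = X"
  and trg_idm [simp]: "X \<in> Ob \<Longrightarrow> trg (idm X) = X"
  and comp_in_Ar [simp]: "f \<in> Ar \<Longrightarrow> g \<in> Ar \<Longrightarrow> trg f = src g \<Longrightarrow> g \<cdot> f \<in> Ar"
  and src_comp [simp]: "f \<in> Ar \<Longrightarrow> g \<in> Ar \<Longrightarrow> trg f = src g \<Longrightarrow> src (g \<cdot> f) = src f"
  and trg_comp [simp]: "f \<in> Ar \<Longrightarrow> g \<in> Ar \<Longrightarrow> trg f = src g \<Longrightarrow> trg (g \<cdot> f) = trg g"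
  and comp_idm_left [simp]: "f \<in> Ar \<Longrightarrow> trg f = Y \<Longrightarrow> idm Y \<cdot> f = f"
  and comp_idm_right [simp]: "f \<in> Ar \<Longrightarrow> src f = X \<Longrightarrow> f \<cdot> idm X = f"
  using category unfolding category_def hom_def by auto

lemma comp_assoc:
  "f \<in> Ar \<Longrightarrow> g \<in> Ar \<Longrightarrow> h \<in> Ar \<Longrightarrow> trg f = src g \<Longrightarrow> trg g = src h \<Longrightarrow>
   (h \<cdot> g) \<cdot> f = h \<cdot> (g \<cdot> f)"
  using category unfolding category_def by auto

lemma iso_in_Ar [simp]: "iso C f \<Longrightarrow> f \<in> Ar"
  by (simp add: iso_def)

lemma isoI:
  "f \<in> Ar \<Longrightarrow> g \<in> Ar \<Longrightarrow> src g = trg f \<Longrightarrow> trg g = src f \<Longrightarrow>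
   g \<cdot> f = idm (src f) \<Longrightarrow> f \<cdot> g = idm (trg f) \<Longrightarrow> iso C f"
  unfolding iso_def hom_def by auto

lemma iso_idm: "X \<in> Ob \<Longrightarrow> iso C (idm X)"
  by (rule isoI[where g = "idm X"]) auto

definition inv_arr :: "'a \<Rightarrow> 'a" where
  "inv_arr f = (SOME g. g \<in> hom C (trg f) (src f) \<and> g \<cdot> f = idm (src f) \<and> f \<cdot> g = idm (trg f))"

lemma
  assumes "iso C f"
  shows inv_arr_in_Ar [simp]: "inv_arr f \<in> Ar"
    and src_inv_arr [simp]: "src (inv_arr f) = trg f"
    and trg_inv_arr [simp]: "trg (inv_arr f) = src f"
    and comp_inv_arr_left [simp]: "inv_arr f \<cdot> f = idm (src f)"
    and comp_inv_arr_right [simp]: "f \<cdot> inv_arr f = idm (trg f)"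
proof -
  have "\<exists>g. g \<in> hom C (trg f) (src f) \<and> g \<cdot> f = idm (src f) \<and> f \<cdot> g = idm (trg f)"
    using assms unfolding iso_def by blast
  then have "inv_arr f \<in> hom C (trg f) (src f) \<and>
      inv_arr f \<cdot> f = idm (src f) \<and> f \<cdot> inv_arr f = idm (trg f)"
    unfolding inv_arr_def by (rule someI_ex)
  then show "inv_arr f \<in> Ar" "src (inv_arr f) = trg f" "trg (inv_arr f) = src f"
    "inv_arr f \<cdot> f = idm (src f)" "f \<cdot> inv_arr f = idm (trg f)"
    by (auto simp: hom_def)
qed

lemma iso_inv_arr: "iso C f \<Longrightarrow> iso C (inv_arr f)"
  by (rule isoI[where g = f]) auto

lemma inv_arr_comp_cancel: "iso C h \<Longrightarrow> f \<in> Ar \<Longrightarrow> trg f = src h \<Longrightarrow> inv_arr h \<cdot> (h \<cdot> f) = f"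
  by (simp flip: comp_assoc)

lemma comp_inv_arr_cancel: "iso C h \<Longrightarrow> f \<in> Ar \<Longrightarrow> trg f = trg h \<Longrightarrow> h \<cdot> (inv_arr h \<cdot> f) = f"
  by (simp flip: comp_assoc)

lemma iso_cancel_left:
  "iso C h \<Longrightarrow> f \<in> Ar \<Longrightarrow> g \<in> Ar \<Longrightarrow> trg f = src h \<Longrightarrow> trg g = src h \<Longrightarrow> h \<cdot> f = h \<cdot> g \<Longrightarrow> f = g"
  by (metis inv_arr_comp_cancel)

lemma iso_cancel_right:
  "iso C h \<Longrightarrow> f \<in> Ar \<Longrightarrow> g \<in> Ar \<Longrightarrow> src f = trg h \<Longrightarrow> src g = trg h \<Longrightarrow> f \<cdot> h = g \<cdot> h \<Longrightarrow> f = g"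
  by (metis comp_assoc comp_idm_right comp_inv_arr_right inv_arr_in_Ar iso_in_Ar src_inv_arr trg_inv_arr)

lemma iso_comp:
  assumes "iso C f" "iso C g" "trg f = src g"
  shows "iso C (g \<cdot> f)"
proof (rule isoI[where g = "inv_arr f \<cdot> inv_arr g"])
  show "(inv_arr f \<cdot> inv_arr g) \<cdot> (g \<cdot> f) = idm (src (g \<cdot> f))"
    using assms by (simp add: comp_assoc inv_arr_comp_cancel)
  show "(g \<cdot> f) \<cdot> (inv_arr f \<cdot> inv_arr g) = idm (trg (g \<cdot> f))"
    using assms by (simp add: comp_assoc comp_inv_arr_cancel)
qed (use assms in simp_all)

end

lemma monoidal_imp_category: "monoidal C \<Longrightarrow> category C"
  by (simp add: monoidal_def)

locale monoidal_category =
  fixes C :: "('o,'a) mcat"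
  assumes monoidal: "monoidal C"
begin

sublocale small_category C
  using monoidal by unfold_locales (rule monoidal_imp_category)

abbreviation ten (infixr "\<otimes>\<^sub>o" 60) where "X \<otimes>\<^sub>o Y \<equiv> mTen C X Y"
abbreviation tenA (infixr "\<otimes>" 60) where "f \<otimes> g \<equiv> mTenA C f g"
abbreviation I where "I \<equiv> mUnit C"
abbreviation assoc where "assoc \<equiv> mAssoc C"
abbreviation lunit where "lunit \<equiv> mLu C"
abbreviation runit where "runit \<equiv> mRu C"

lemma unit_in_Ob [simp]: "I \<in> Ob"
  and ten_in_Ob [simp]: "X \<in> Ob \<Longrightarrow> Y \<in> Ob \<Longrightarrow> X \<otimes>\<^sub>o Y \<in> Ob"
  and tenA_in_Ar [simp]: "f \<in> Ar \<Longrightarrow> g \<in> Ar \<Longrightarrow> f \<otimes> g \<in> Ar"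
  and src_tenA [simp]: "f \<in> Ar \<Longrightarrow> g \<in> Ar \<Longrightarrow> src (f \<otimes> g) = src f \<otimes>\<^sub>o src g"
  and trg_tenA [simp]: "f \<in> Ar \<Longrightarrow> g \<in> Ar \<Longrightarrow> trg (f \<otimes> g) = trg f \<otimes>\<^sub>o trg g"
  and assoc_in_Ar [simp]: "X \<in> Ob \<Longrightarrow> Y \<in> Ob \<Longrightarrow> Z \<in> Ob \<Longrightarrow> assoc X Y Z \<in> Ar"
  and src_assoc [simp]: "X \<in> Ob \<Longrightarrow> Y \<in> Ob \<Longrightarrow> Z \<in> Ob \<Longrightarrow> src (assoc X Y Z) = (X \<otimes>\<^sub>o Y) \<otimes>\<^sub>o Z"
  and trg_assoc [simp]: "X \<in> Ob \<Longrightarrow> Y \<in> Ob \<Longrightarrow> Z \<in> Ob \<Longrightarrow> trg (assoc X Y Z) = X \<otimes>\<^sub>o (Y \<otimes>\<^sub>o Z)"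
  and lunit_in_Ar [simp]: "X \<in> Ob \<Longrightarrow> lunit X \<in> Ar"
  and src_lunit [simp]: "X \<in> Ob \<Longrightarrow> src (lunit X) = I \<otimes>\<^sub>o X"
  and trg_lunit [simp]: "X \<in> Ob \<Longrightarrow> trg (lunit X) = X"
  and runit_in_Ar [simp]: "X \<in> Ob \<Longrightarrow> runit X \<in> Ar"
  and src_runit [simp]: "X \<in> Ob \<Longrightarrow> src (runit X) = X \<otimes>\<^sub>o I"
  and trg_runit [simp]: "X \<in> Ob \<Longrightarrow> trg (runit X) = X"
  using monoidal unfolding monoidal_def hom_def by auto

lemma tenA_idm: "X \<in> Ob \<Longrightarrow> Y \<in> Ob \<Longrightarrow> idm X \<otimes> idm Y = idm (X \<otimes>\<^sub>o Y)"
  and interchange: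
    "f \<in> Ar \<Longrightarrow> f' \<in> Ar \<Longrightarrow> g \<in> Ar \<Longrightarrow> g' \<in> Ar \<Longrightarrow> trg f = src f' \<Longrightarrow> trg g = src g' \<Longrightarrow>
     (f' \<cdot> f) \<otimes> (g' \<cdot> g) = (f' \<otimes> g') \<cdot> (f \<otimes> g)"
  and iso_assoc: "X \<in> Ob \<Longrightarrow> Y \<in> Ob \<Longrightarrow> Z \<in> Ob \<Longrightarrow> iso C (assoc X Y Z)"
  and iso_lunit: "X \<in> Ob \<Longrightarrow> iso C (lunit X)"
  and iso_runit: "X \<in> Ob \<Longrightarrow> iso C (runit X)"
  and assoc_naturality: "f \<in> Ar \<Longrightarrow> g \<in> Ar \<Longrightarrow> h \<in> Ar \<Longrightarrow>
     assoc (trg f) (trg g) (trg h) \<cdot> ((f \<otimes> g) \<otimes> h) = (f \<otimes> (g \<otimes> h)) \<cdot> assoc (src f) (src g) (src h)"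
  and lunit_naturality: "f \<in> Ar \<Longrightarrow> lunit (trg f) \<cdot> (idm I \<otimes> f) = f \<cdot> lunit (src f)"
  and runit_naturality: "f \<in> Ar \<Longrightarrow> runit (trg f) \<cdot> (f \<otimes> idm I) = f \<cdot> runit (src f)"
  and pentagon: "W \<in> Ob \<Longrightarrow> X \<in> Ob \<Longrightarrow> Y \<in> Ob \<Longrightarrow> Z \<in> Ob \<Longrightarrow>
     assoc W X (Y \<otimes>\<^sub>o Z) \<cdot> assoc (W \<otimes>\<^sub>o X) Y Z =
     (idm W \<otimes> assoc X Y Z) \<cdot> (assoc W (X \<otimes>\<^sub>o Y) Z \<cdot> (assoc W X Y \<otimes> idm Z))"
  and triangle: "X \<in> Ob \<Longrightarrow> Y \<in> Ob \<Longrightarrow> (idm X \<otimes> lunit Y) \<cdot> assoc X I Y = runit X \<otimes> idm Y"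
  using monoidal unfolding monoidal_def by auto

lemma iso_tenA:
  assumes "iso C f" "iso C g"
  shows "iso C (f \<otimes> g)"
proof (rule isoI[where g = "inv_arr f \<otimes> inv_arr g"])
  show "(inv_arr f \<otimes> inv_arr g) \<cdot> (f \<otimes> g) = idm (src (f \<otimes> g))"
    using assms by (simp flip: interchange add: tenA_idm)
  show "(f \<otimes> g) \<cdot> (inv_arr f \<otimes> inv_arr g) = idm (trg (f \<otimes> g))"
    using assms by (simp flip: interchange add: tenA_idm)
qed (use assms in simp_all)

lemma unit_tenA_cancel:
  assumes "f \<in> Ar" "g \<in> Ar" "src f = src g" "trg f = trg g" "idm I \<otimes> f = idm I \<otimes> g"
  shows "f = g"
proof (rule iso_cancel_right[OF iso_lunit[of "src f"]])
  have "f \<cdot> lunit (src f) = lunit (trg f) \<cdot> (idm I \<otimes> f)"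
    using lunit_naturality[OF assms(1)] by simp
  also have "\<dots> = g \<cdot> lunit (src g)"
    using assms lunit_naturality[OF assms(2)] by simp
  finally show "f \<cdot> lunit (src f) = g \<cdot> lunit (src f)"
    using assms(3) by simp
qed (use assms in simp_all)

lemma tenA_unit_cancel:
  assumes "f \<in> Ar" "g \<in> Ar" "src f = src g" "trg f = trg g" "f \<otimes> idm I = g \<otimes> idm I"
  shows "f = g"
proof (rule iso_cancel_right[OF iso_runit[of "src f"]])
  have "f \<cdot> runit (src f) = runit (trg f) \<cdot> (f \<otimes> idm I)"
    using runit_naturality[OF assms(1)] by simp
  also have "\<dots> = g \<cdot> runit (src g)"
    using assms runit_naturality[OF assms(2)] by simp
  finally show "f \<cdot> runit (src f) = g \<cdot> runit (src f)"
    using assms(3) by simp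
qed (use assms in simp_all)

text \<open>Kelly's coherence lemma: comparing the two ways around the pentagon for (I, I, X, Y)
  and using the triangle twice shows both sides agree after tensoring with idm I.\<close>
lemma lunit_tensor:
  assumes X: "X \<in> Ob" and Y: "Y \<in> Ob"
  shows "lunit X \<otimes> idm Y = lunit (X \<otimes>\<^sub>o Y) \<cdot> assoc I X Y"
proof -
  define P where "P = assoc I (I \<otimes>\<^sub>o X) Y \<cdot> (assoc I I X \<otimes> idm Y)"
  have P: "iso C P"
    unfolding P_def using X Y by (intro iso_comp iso_tenA iso_assoc iso_idm) simp_all
  let ?L = "idm I \<otimes> lunit (X \<otimes>\<^sub>o Y)"
  let ?pent = "?L \<cdot> (assoc I I (X \<otimes>\<^sub>o Y) \<cdot> assoc (I \<otimes>\<^sub>o I) X Y)"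
  have "?pent = (runit I \<otimes> (idm X \<otimes> idm Y)) \<cdot> assoc (I \<otimes>\<^sub>o I) X Y"
    using X Y by (simp flip: comp_assoc add: triangle tenA_idm)
  also have "\<dots> = assoc I X Y \<cdot> (((idm I \<otimes> lunit X) \<cdot> assoc I I X) \<otimes> idm Y)"
    using X Y assoc_naturality[of "runit I" "idm X" "idm Y"] by (simp add: triangle)
  also have "\<dots> = (assoc I X Y \<cdot> ((idm I \<otimes> lunit X) \<otimes> idm Y)) \<cdot> (assoc I I X \<otimes> idm Y)"
    using X Y interchange[of "assoc I I X" "idm I \<otimes> lunit X" "idm Y" "idm Y"] by (simp add: comp_assoc)
  also have "\<dots> = (idm I \<otimes> (lunit X \<otimes> idm Y)) \<cdot> P"
    using X Y assoc_naturality[of "idm I" "lunit X" "idm Y"] by (simp add: comp_assoc P_def)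
  finally have pent_lunit: "?pent = (idm I \<otimes> (lunit X \<otimes> idm Y)) \<cdot> P" .
  have "?pent = (?L \<cdot> (idm I \<otimes> assoc I X Y)) \<cdot> P"
    using X Y by (simp add: pentagon P_def comp_assoc)
  also have "\<dots> = (idm I \<otimes> (lunit (X \<otimes>\<^sub>o Y) \<cdot> assoc I X Y)) \<cdot> P"
    using X Y interchange[of "idm I" "idm I" "assoc I X Y" "lunit (X \<otimes>\<^sub>o Y)"] by simp
  finally have pent_assoc: "?pent = (idm I \<otimes> (lunit (X \<otimes>\<^sub>o Y) \<cdot> assoc I X Y)) \<cdot> P" .
  have tensored: "idm I \<otimes> (lunit X \<otimes> idm Y) = idm I \<otimes> (lunit (X \<otimes>\<^sub>o Y) \<cdot> assoc I X Y)"
    by (rule iso_cancel_right[OF P]) (use X Y pent_lunit pent_assoc in \<open>simp_all add: P_def\<close>)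
  show ?thesis
    by (rule unit_tenA_cancel) (use X Y tensored in simp_all)
qed

lemma lunit_unit_tensor: "lunit (I \<otimes>\<^sub>o I) = idm I \<otimes> lunit I"
proof (rule iso_cancel_left[OF iso_lunit[of I]])
  show "lunit I \<cdot> lunit (I \<otimes>\<^sub>o I) = lunit I \<cdot> (idm I \<otimes> lunit I)"
    using lunit_naturality[of "lunit I"] by simp
qed simp_all

lemma lunit_unit_eq_runit_unit: "lunit I = runit I"
proof (rule tenA_unit_cancel)
  have "lunit I \<otimes> idm I = lunit (I \<otimes>\<^sub>o I) \<cdot> assoc I I I"
    by (simp add: lunit_tensor)
  also have "\<dots> = runit I \<otimes> idm I"
    by (simp add: lunit_unit_tensor triangle)
  finally show "lunit I \<otimes> idm I = runit I \<otimes> idm I" .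
qed simp_all

end

locale symmetric_monoidal_category = monoidal_category +
  fixes s
  assumes symmetric: "symmetric C s"
begin

lemma sym_in_Ar [simp]: "X \<in> Ob \<Longrightarrow> Y \<in> Ob \<Longrightarrow> s X Y \<in> Ar"
  and src_sym [simp]: "X \<in> Ob \<Longrightarrow> Y \<in> Ob \<Longrightarrow> src (s X Y) = X \<otimes>\<^sub>o Y"
  and trg_sym [simp]: "X \<in> Ob \<Longrightarrow> Y \<in> Ob \<Longrightarrow> trg (s X Y) = Y \<otimes>\<^sub>o X"
  using symmetric unfolding symmetric_def hom_def by auto

lemma sym_naturality: "f \<in> Ar \<Longrightarrow> g \<in> Ar \<Longrightarrow> s (trg f) (trg g) \<cdot> (f \<otimes> g) = (g \<otimes> f) \<cdot> s (src f) (src g)"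
  and sym_sym: "X \<in> Ob \<Longrightarrow> Y \<in> Ob \<Longrightarrow> s Y X \<cdot> s X Y = idm (X \<otimes>\<^sub>o Y)"
  and hexagon: "X \<in> Ob \<Longrightarrow> Y \<in> Ob \<Longrightarrow> Z \<in> Ob \<Longrightarrow>
     assoc Y Z X \<cdot> (s X (Y \<otimes>\<^sub>o Z) \<cdot> assoc X Y Z) = (idm Y \<otimes> s X Z) \<cdot> (assoc Y X Z \<cdot> (s X Y \<otimes> idm Z))"
  using symmetric unfolding symmetric_def by auto

lemma iso_sym: "X \<in> Ob \<Longrightarrow> Y \<in> Ob \<Longrightarrow> iso C (s X Y)"
  by (rule isoI[where g = "s Y X"]) (simp_all add: sym_sym)

text \<open>Composing the hexagon for (I, I, I) with lunit (I \<otimes> I), Kelly's lemma and the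
  triangle turn it into s I I \<cdot> (runit I \<otimes> idm I) = s I I \<cdot> ((lunit I \<cdot> s I I) \<otimes> idm I).\<close>
lemma lunit_unit_comp_sym: "lunit I \<cdot> s I I = lunit I"
proof -
  have kelly: "lunit (I \<otimes>\<^sub>o I) \<cdot> assoc I I I = lunit I \<otimes> idm I"
    by (simp add: lunit_tensor)
  have "lunit (I \<otimes>\<^sub>o I) \<cdot> (assoc I I I \<cdot> (s I (I \<otimes>\<^sub>o I) \<cdot> assoc I I I))
      = ((lunit I \<otimes> idm I) \<cdot> s I (I \<otimes>\<^sub>o I)) \<cdot> assoc I I I"
    by (simp flip: comp_assoc kelly)
  also have "\<dots> = s I I \<cdot> ((idm I \<otimes> lunit I) \<cdot> assoc I I I)"
    using sym_naturality[of "idm I" "lunit I"] by (simp flip: comp_assoc)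
  finally have left: "lunit (I \<otimes>\<^sub>o I) \<cdot> (assoc I I I \<cdot> (s I (I \<otimes>\<^sub>o I) \<cdot> assoc I I I))
      = s I I \<cdot> (runit I \<otimes> idm I)"
    by (simp add: triangle)
  have "lunit (I \<otimes>\<^sub>o I) \<cdot> ((idm I \<otimes> s I I) \<cdot> (assoc I I I \<cdot> (s I I \<otimes> idm I)))
      = s I I \<cdot> ((lunit (I \<otimes>\<^sub>o I) \<cdot> assoc I I I) \<cdot> (s I I \<otimes> idm I))"
    using lunit_naturality[of "s I I"] by (simp flip: comp_assoc)
  also have "\<dots> = s I I \<cdot> ((lunit I \<cdot> s I I) \<otimes> idm I)"
    using interchange[of "s I I" "lunit I" "idm I" "idm I"] by (simp add: kelly)
  finally have right: "lunit (I \<otimes>\<^sub>o I) \<cdot> ((idm I \<otimes> s I I) \<cdot> (assoc I I I \<cdot> (s I I \<otimes> idm I)))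
      = s I I \<cdot> ((lunit I \<cdot> s I I) \<otimes> idm I)" .
  have tensored: "runit I \<otimes> idm I = (lunit I \<cdot> s I I) \<otimes> idm I"
    by (rule iso_cancel_left[OF iso_sym[of I I]]) (use left right hexagon[of I I I] in simp_all)
  have "runit I = lunit I \<cdot> s I I"
    by (rule tenA_unit_cancel) (use tensored in simp_all)
  then show ?thesis
    by (simp add: lunit_unit_eq_runit_unit)
qed

end

section \<open>Indiscrete categories\<close>

definition indiscrete :: "('o,'a) mcat \<Rightarrow> bool" where
  "indiscrete C \<longleftrightarrow> (\<forall>X\<in>mOb C. \<forall>Y\<in>mOb C. \<exists>!f. f \<in> hom C X Y)"

lemma in_Z_iff_indiscrete: "in_Z C \<longleftrightarrow> monoidal C \<and> indiscrete C"
  by (simp add: in_Z_def indiscrete_def)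

context small_category
begin

lemma indiscrete_hom_eq:
  assumes "indiscrete C" "f \<in> hom C X Y" "g \<in> hom C X Y"
  shows "f = g"
proof -
  have "X \<in> Ob" "Y \<in> Ob"
    using assms(2) by (auto simp: hom_def)
  then show ?thesis
    using assms unfolding indiscrete_def by blast
qed

lemma indiscrete_parallel_eq:
  "indiscrete C \<Longrightarrow> f \<in> Ar \<Longrightarrow> g \<in> Ar \<Longrightarrow> src f = src g \<Longrightarrow> trg f = trg g \<Longrightarrow> f = g"
  by (rule indiscrete_hom_eq[of f "src f" "trg f"]) (auto simp: hom_def)

lemma indiscrete_the_hom:
  "indiscrete C \<Longrightarrow> X \<in> Ob \<Longrightarrow> Y \<in> Ob \<Longrightarrow> (THE f. f \<in> hom C X Y) \<in> hom C X Y"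
  unfolding indiscrete_def by (metis theI')

lemma indiscrete_iso:
  assumes "indiscrete C" "f \<in> Ar"
  shows "iso C f"
proof -
  have "(THE g. g \<in> hom C (trg f) (src f)) \<in> hom C (trg f) (src f)"
    using assms by (simp add: indiscrete_the_hom)
  then obtain g where "g \<in> hom C (trg f) (src f)" ..
  then show ?thesis
    using assms by (intro isoI[of f g]) (auto simp: hom_def intro: indiscrete_parallel_eq)
qed

end

text \<open>In an indiscrete category every diagram commutes, so all coherence conditions hold
  as soon as the structure maps have the right sources and targets.\<close>
lemma monoidal_if_indiscrete:
  assumes "category C" "indiscrete C" "mUnit C \<in> mOb C"
    and "\<And>X Y. X \<in> mOb C \<Longrightarrow> Y \<in> mOb C \<Longrightarrow> mTen C X Y \<in> mOb C"
    and "\<And>f g. f \<in> mAr C \<Longrightarrow> g \<in> mAr C \<Longrightarrow>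
      mTenA C f g \<in> hom C (mTen C (mDom C f) (mDom C g)) (mTen C (mCod C f) (mCod C g))"
    and "\<And>X Y Z. X \<in> mOb C \<Longrightarrow> Y \<in> mOb C \<Longrightarrow> Z \<in> mOb C \<Longrightarrow>
      mAssoc C X Y Z \<in> hom C (mTen C (mTen C X Y) Z) (mTen C X (mTen C Y Z))"
    and "\<And>X. X \<in> mOb C \<Longrightarrow> mLu C X \<in> hom C (mTen C (mUnit C) X) X"
    and "\<And>X. X \<in> mOb C \<Longrightarrow> mRu C X \<in> hom C (mTen C X (mUnit C)) X"
  shows "monoidal C"
proof -
  interpret small_category C by (rule small_category.intro) fact
  show ?thesis
    unfolding monoidal_def
    by (intro conjI ballI impI; (rule indiscrete_parallel_eq indiscrete_iso)?)
      (use assms in \<open>auto simp: hom_def\<close>)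
qed

lemma symmetric_if_indiscrete:
  assumes "monoidal C" "indiscrete C"
    and "\<And>X Y. X \<in> mOb C \<Longrightarrow> Y \<in> mOb C \<Longrightarrow> s X Y \<in> hom C (mTen C X Y) (mTen C Y X)"
  shows "symmetric C s"
proof -
  interpret monoidal_category C by (rule monoidal_category.intro) fact
  show ?thesis
    unfolding symmetric_def
    by (intro conjI ballI; (rule indiscrete_parallel_eq)?) (use assms in \<open>auto simp: hom_def\<close>)
qed

lemma strong_monoidal_into_indiscrete:
  assumes "monoidal C" "monoidal D" "indiscrete D"
    and "\<And>X. X \<in> mOb C \<Longrightarrow> fO F X \<in> mOb D"
    and "\<And>f. f \<in> mAr C \<Longrightarrow> fA F f \<in> hom D (fO F (mDom C f)) (fO F (mCod C f))"
    and "fPhi0 F \<in> hom D (mUnit D) (fO F (mUnit C))"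
    and "\<And>X Y. X \<in> mOb C \<Longrightarrow> Y \<in> mOb C \<Longrightarrow>
      fPhi F X Y \<in> hom D (mTen D (fO F X) (fO F Y)) (fO F (mTen C X Y))"
  shows "strong_monoidal C D F"
proof -
  interpret C: monoidal_category C by (rule monoidal_category.intro) fact
  interpret D: monoidal_category D by (rule monoidal_category.intro) fact
  show ?thesis
    unfolding strong_monoidal_def is_functor_def
    by (intro conjI ballI impI; (rule D.indiscrete_parallel_eq D.indiscrete_iso)?)
      (use assms in \<open>auto simp: hom_def\<close>)
qed

lemma symmetric_strong_monoidal_into_indiscrete:
  assumes "symmetric C s" "symmetric D t" "strong_monoidal C D F" "indiscrete D"
  shows "symmetric_strong_monoidal C s D t F"
proof -
  interpret C: symmetric_monoidal_category C s
    using assms(1) by unfold_locales (simp_all add: symmetric_def)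
  interpret D: symmetric_monoidal_category D t
    using assms(2) by unfold_locales (simp_all add: symmetric_def)
  show ?thesis
    unfolding symmetric_strong_monoidal_def
    by (intro conjI ballI; (rule D.indiscrete_parallel_eq)?)
      (use assms in \<open>auto simp: strong_monoidal_def is_functor_def hom_def\<close>)
qed

lemma smf_eq_into_indiscrete:
  assumes "strong_monoidal C D G" "strong_monoidal C D G'" "indiscrete D"
    and "\<And>X. X \<in> mOb C \<Longrightarrow> fO G X = fO G' X"
  shows "smf_eq C G G'"
proof -
  interpret C: monoidal_category C
    using assms(1) by unfold_locales (simp add: strong_monoidal_def)
  interpret D: monoidal_category D
    using assms(1) by unfold_locales (simp add: strong_monoidal_def)
  show ?thesis
    unfolding smf_eq_def
    by (intro conjI ballI; (rule D.indiscrete_parallel_eq)?)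
      (use assms in \<open>auto simp: strong_monoidal_def is_functor_def hom_def\<close>)
qed

lemma sym_refl_univ_if_refl_univ:
  assumes "symmetric RM r" "refl_univ M RM e N F"
  shows "sym_refl_univ M RM r e s N t F"
  unfolding sym_refl_univ_def
proof (rule impI, elim conjE, intro conjI allI impI)
  assume "in_Z N" "symmetric_strong_monoidal M s N t F"
  then have N: "indiscrete N" "symmetric N t" and "strong_monoidal M N F"
    by (simp_all add: in_Z_iff_indiscrete symmetric_strong_monoidal_def)
  with assms(2) obtain G where "strong_monoidal RM N G" "smf_eq M (smf_comp N G e) F"
    using \<open>in_Z N\<close> unfolding refl_univ_def by blast
  then show "\<exists>G. symmetric_strong_monoidal RM r N t G \<and> smf_eq M (smf_comp N G e) F"
    using assms(1) N symmetric_strong_monoidal_into_indiscrete by blast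
  show "smf_eq RM G G'"
    if "symmetric_strong_monoidal RM r N t G \<and> smf_eq M (smf_comp N G e) F \<and>
        symmetric_strong_monoidal RM r N t G' \<and> smf_eq M (smf_comp N G' e) F" for G G'
    using that assms(2) \<open>in_Z N\<close> \<open>strong_monoidal M N F\<close>
    unfolding refl_univ_def symmetric_strong_monoidal_def by blast
qed

lemma sym_corefl_univ_if_corefl_univ:
  assumes "symmetric SM r" "indiscrete SM" "corefl_univ M SM e N F"
  shows "sym_corefl_univ M SM r e s N t F"
  unfolding sym_corefl_univ_def
proof (rule impI, elim conjE, intro conjI allI impI)
  assume "in_Z N" "symmetric_strong_monoidal N t M s F"
  then have "symmetric N t" and "strong_monoidal N M F"
    by (simp_all add: symmetric_strong_monoidal_def)
  with assms(3) obtain G where "strong_monoidal N SM G" "smf_eq N (smf_comp M e G) F"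
    using \<open>in_Z N\<close> unfolding corefl_univ_def by blast
  then show "\<exists>G. symmetric_strong_monoidal N t SM r G \<and> smf_eq N (smf_comp M e G) F"
    using assms(1,2) \<open>symmetric N t\<close> symmetric_strong_monoidal_into_indiscrete by blast
  show "smf_eq N G G'"
    if "symmetric_strong_monoidal N t SM r G \<and> smf_eq N (smf_comp M e G) F \<and>
        symmetric_strong_monoidal N t SM r G' \<and> smf_eq N (smf_comp M e G') F" for G G'
    using that assms(3) \<open>in_Z N\<close> \<open>strong_monoidal N M F\<close>
    unfolding corefl_univ_def symmetric_strong_monoidal_def by blast
qed

section \<open>The reflection R(M)\<close>

lemma R_simps [simp]:
  "mOb (R M) = mOb M" "mAr (R M) = mOb M \<times> mOb M" "mDom (R M) = fst" "mCod (R M) = snd"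
  "mId (R M) X = (X, X)" "mComp (R M) g f = (fst f, snd g)" "mTen (R M) = mTen M"
  "mTenA (R M) f g = (mTen M (fst f) (fst g), mTen M (snd f) (snd g))" "mUnit (R M) = mUnit M"
  "mAssoc (R M) X Y Z = (mTen M (mTen M X Y) Z, mTen M X (mTen M Y Z))"
  "mLu (R M) X = (mTen M (mUnit M) X, X)" "mRu (R M) X = (mTen M X (mUnit M), X)"
  by (simp_all add: R_def)

lemma indiscrete_R: "indiscrete (R M)"
  unfolding indiscrete_def hom_def by auto

lemma monoidal_R: "monoidal M \<Longrightarrow> monoidal (R M)"
  by (rule monoidal_if_indiscrete[OF _ indiscrete_R])
    (auto simp: category_def monoidal_def hom_def)

lemma in_Z_R: "monoidal M \<Longrightarrow> in_Z (R M)"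
  by (simp add: in_Z_iff_indiscrete monoidal_R indiscrete_R)

lemma symmetric_R: "monoidal M \<Longrightarrow> symmetric (R M) (Rsym M)"
  by (rule symmetric_if_indiscrete[OF monoidal_R indiscrete_R])
    (auto simp: hom_def Rsym_def monoidal_def)

lemma strong_monoidal_eta: "monoidal M \<Longrightarrow> strong_monoidal M (R M) (eta M)"
  by (rule strong_monoidal_into_indiscrete[OF _ monoidal_R indiscrete_R])
    (auto simp: monoidal_def category_def hom_def eta_def)

definition R_extend :: "('p,'b) mcat \<Rightarrow> ('o,'a,'p,'b) smf \<Rightarrow> ('o,'o \<times> 'o,'p,'b) smf" where
  "R_extend N F = \<lparr>fO = fO F, fA = (\<lambda>(X, Y). THE g. g \<in> hom N (fO F X) (fO F Y)),
     fPhi = fPhi F, fPhi0 = fPhi0 F\<rparr>"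

lemma strong_monoidal_R_extend:
  assumes "indiscrete N" "strong_monoidal M N F"
  shows "strong_monoidal (R M) N (R_extend N F)"
proof -
  interpret N: monoidal_category N
    using assms(2) by unfold_locales (simp add: strong_monoidal_def)
  have F_Ob: "fO F X \<in> N.Ob" if "X \<in> mOb M" for X
    using assms(2) that by (simp add: strong_monoidal_def is_functor_def)
  show ?thesis
    by (rule strong_monoidal_into_indiscrete[OF monoidal_R N.monoidal assms(1)])
      (use assms(2) F_Ob N.indiscrete_the_hom[OF assms(1)]
         in \<open>auto simp: R_extend_def strong_monoidal_def\<close>)
qed

lemma R_extend_comp_eta:
  assumes "indiscrete N" "strong_monoidal M N F"
  shows "smf_eq M (smf_comp N (R_extend N F) (eta M)) F"
proof -
  interpret M: monoidal_category M
    using assms(2) by unfold_locales (simp add: strong_monoidal_def)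
  interpret N: monoidal_category N
    using assms(2) by unfold_locales (simp add: strong_monoidal_def)
  show ?thesis
    unfolding smf_eq_def
    by (intro conjI ballI; (rule N.indiscrete_parallel_eq[OF assms(1)])?)
      (use assms(2) N.indiscrete_the_hom[OF assms(1)]
         in \<open>auto simp: R_extend_def smf_comp_def eta_def strong_monoidal_def is_functor_def hom_def\<close>)
qed

lemma refl_univ_R: "refl_univ M (R M) (eta M) N F"
  unfolding refl_univ_def
proof (rule impI, elim conjE, intro conjI allI impI)
  assume "in_Z N" and F: "strong_monoidal M N F"
  then have N: "indiscrete N"
    by (simp add: in_Z_iff_indiscrete)
  show "\<exists>G. strong_monoidal (R M) N G \<and> smf_eq M (smf_comp N G (eta M)) F"
    using strong_monoidal_R_extend[OF N F] R_extend_comp_eta[OF N F] by blast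
  show "smf_eq (R M) G G'"
    if "strong_monoidal (R M) N G \<and> smf_eq M (smf_comp N G (eta M)) F \<and>
        strong_monoidal (R M) N G' \<and> smf_eq M (smf_comp N G' (eta M)) F" for G G'
    using that by (intro smf_eq_into_indiscrete[OF _ _ N])
      (auto simp: smf_eq_def smf_comp_def eta_def)
qed

section \<open>The coreflection S(M)\<close>

lemma S_simps [simp]:
  "mOb (S M) = S_ob M"
  "mAr (S M) = {(A, f, B). A \<in> S_ob M \<and> B \<in> S_ob M \<and> f \<in> hom M (fst A) (fst B) \<and>
     mComp M (snd B) f = snd A}"
  "mDom (S M) = fst" "mCod (S M) = (\<lambda>u. snd (snd u))"
  "mId (S M) A = (A, mId M (fst A), A)"
  "mComp (S M) g f = (fst f, mComp M (fst (snd g)) (fst (snd f)), snd (snd g))"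
  "mTen (S M) A B = (mTen M (fst A) (fst B), mComp M (mLu M (mUnit M)) (mTenA M (snd A) (snd B)))"
  "mTenA (S M) f g = (mTen (S M) (fst f) (fst g), mTenA M (fst (snd f)) (fst (snd g)),
     mTen (S M) (snd (snd f)) (snd (snd g)))"
  "mUnit (S M) = (mUnit M, mId M (mUnit M))"
  "mAssoc (S M) A B D = (mTen (S M) (mTen (S M) A B) D, mAssoc M (fst A) (fst B) (fst D),
     mTen (S M) A (mTen (S M) B D))"
  "mLu (S M) A = (mTen (S M) (mUnit M, mId M (mUnit M)) A, mLu M (fst A), A)"
  "mRu (S M) A = (mTen (S M) A (mUnit M, mId M (mUnit M)), mRu M (fst A), A)"
  by (simp_all add: S_def Let_def)

context monoidal_category
begin

lemma in_S_ob_iff: "(X, x) \<in> S_ob C \<longleftrightarrow> X \<in> Ob \<and> x \<in> Ar \<and> src x = X \<and> trg x = I \<and> iso C x"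
  by (auto simp: S_ob_def hom_def)

lemma S_obD:
  assumes "A \<in> S_ob C"
  shows "fst A \<in> Ob" "snd A \<in> Ar" "src (snd A) = fst A" "trg (snd A) = I" "iso C (snd A)"
  using assms by (auto simp: S_ob_def hom_def)

lemma S_ten_in_S_ob: "A \<in> S_ob C \<Longrightarrow> B \<in> S_ob C \<Longrightarrow> mTen (S C) A B \<in> S_ob C"
  by (auto simp: S_ob_def hom_def S_obD intro!: iso_comp iso_tenA iso_lunit)

lemma S_unit_in_S_ob: "mUnit (S C) \<in> S_ob C"
  by (simp add: S_ob_def hom_def iso_idm)

lemma category_S: "category (S C)"
  unfolding category_def
proof (intro conjI ballI impI)
  fix u v
  assume u: "u \<in> mAr (S C)" and v: "v \<in> mAr (S C)" and uv: "mCod (S C) u = mDom (S C) v"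
  obtain A f B where [simp]: "u = (A, f, B)" by (cases u) auto
  obtain g D where [simp]: "v = (B, g, D)" using uv by (cases v) auto
  have "f \<in> Ar" "trg f = fst B" "snd B \<cdot> f = snd A" "g \<in> Ar" "src g = fst B" "snd D \<cdot> g = snd B"
    using u v by (auto simp: hom_def)
  then show "mComp (S C) v u \<in> hom (S C) (mDom (S C) u) (mCod (S C) v)"
    using u v S_obD(2,3)[of D] by (auto simp: hom_def simp flip: comp_assoc)
next
  fix u v w
  assume u: "u \<in> mAr (S C)" and v: "v \<in> mAr (S C)" and w: "w \<in> mAr (S C)"
    and uv: "mCod (S C) u = mDom (S C) v" and vw: "mCod (S C) v = mDom (S C) w"
  obtain A f B where [simp]: "u = (A, f, B)" by (cases u) auto
  obtain g D where [simp]: "v = (B, g, D)" using uv by (cases v) auto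
  obtain h E where [simp]: "w = (D, h, E)" using vw by (cases w) auto
  have "f \<in> Ar" "trg f = fst B" "g \<in> Ar" "src g = fst B" "trg g = fst D" "h \<in> Ar" "src h = fst D"
    using u v w by (auto simp: hom_def)
  then show "mComp (S C) w (mComp (S C) v u) = mComp (S C) (mComp (S C) w v) u"
    by (simp add: comp_assoc)
qed (auto simp: hom_def S_obD)

lemma indiscrete_S: "indiscrete (S C)"
  unfolding indiscrete_def
proof (intro ballI ex1I)
  fix A B
  assume "A \<in> mOb (S C)" "B \<in> mOb (S C)"
  then have A: "A \<in> S_ob C" and B: "B \<in> S_ob C"
    by simp_all
  show "(A, inv_arr (snd B) \<cdot> snd A, B) \<in> hom (S C) A B"
    using A B S_obD[OF A] S_obD[OF B] by (simp add: hom_def comp_inv_arr_cancel)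
  show "u = (A, inv_arr (snd B) \<cdot> snd A, B)" if "u \<in> hom (S C) A B" for u
  proof -
    have "u = (A, fst (snd u), B)" "fst (snd u) \<in> Ar" "trg (fst (snd u)) = fst B"
      "snd B \<cdot> fst (snd u) = snd A"
      using that by (auto simp: hom_def)
    then show ?thesis
      using S_obD[OF B] by (metis inv_arr_comp_cancel)
  qed
qed

lemma lunit_unit_assoc:
  assumes "p \<in> Ar" "q \<in> Ar" "r \<in> Ar" "trg p = I" "trg q = I" "trg r = I"
  shows "(lunit I \<cdot> (p \<otimes> (lunit I \<cdot> (q \<otimes> r)))) \<cdot> assoc (src p) (src q) (src r)
    = lunit I \<cdot> ((lunit I \<cdot> (p \<otimes> q)) \<otimes> r)"
proof -
  have "(lunit I \<cdot> (p \<otimes> (lunit I \<cdot> (q \<otimes> r)))) \<cdot> assoc (src p) (src q) (src r)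
      = lunit I \<cdot> ((idm I \<otimes> lunit I) \<cdot> ((p \<otimes> (q \<otimes> r)) \<cdot> assoc (src p) (src q) (src r)))"
    using assms interchange[of p "idm I" "q \<otimes> r" "lunit I"] by (simp add: comp_assoc)
  also have "\<dots> = lunit I \<cdot> (((idm I \<otimes> lunit I) \<cdot> assoc I I I) \<cdot> ((p \<otimes> q) \<otimes> r))"
    using assms assoc_naturality[of p q r] by (simp add: comp_assoc)
  also have "\<dots> = lunit I \<cdot> ((runit I \<cdot> (p \<otimes> q)) \<otimes> (idm I \<cdot> r))"
    using assms interchange[of "p \<otimes> q" "runit I" r "idm I"] by (simp add: triangle)
  finally show ?thesis
    using assms by (simp add: lunit_unit_eq_runit_unit)
qed

lemma monoidal_S: "monoidal (S C)"
proof (rule monoidal_if_indiscrete[OF category_S indiscrete_S])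
  show "mUnit (S C) \<in> mOb (S C)"
    using S_unit_in_S_ob by simp
  show "mTen (S C) A B \<in> mOb (S C)" if "A \<in> mOb (S C)" "B \<in> mOb (S C)" for A B
    using that S_ten_in_S_ob by simp
  show "mTenA (S C) u v \<in> hom (S C) (mTen (S C) (mDom (S C) u) (mDom (S C) v))
      (mTen (S C) (mCod (S C) u) (mCod (S C) v))"
    if "u \<in> mAr (S C)" "v \<in> mAr (S C)" for u v
  proof -
    obtain A f B A' g B' where [simp]: "u = (A, f, B)" "v = (A', g, B')"
      by (cases u, cases v) auto
    have f: "A \<in> S_ob C" "B \<in> S_ob C" "f \<in> Ar" "src f = fst A" "trg f = fst B" "snd B \<cdot> f = snd A"
      and g: "A' \<in> S_ob C" "B' \<in> S_ob C" "g \<in> Ar" "src g = fst A'" "trg g = fst B'" "snd B' \<cdot> g = snd A'"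
      using that by (auto simp: hom_def)
    have "(lunit I \<cdot> (snd B \<otimes> snd B')) \<cdot> (f \<otimes> g) = lunit I \<cdot> ((snd B \<cdot> f) \<otimes> (snd B' \<cdot> g))"
      using f g S_obD[OF f(2)] S_obD[OF g(2)] by (simp add: comp_assoc flip: interchange)
    then show ?thesis
      using f g S_ten_in_S_ob by (simp add: hom_def)
  qed
  show "mAssoc (S C) A B D \<in> hom (S C) (mTen (S C) (mTen (S C) A B) D) (mTen (S C) A (mTen (S C) B D))"
    if "A \<in> mOb (S C)" "B \<in> mOb (S C)" "D \<in> mOb (S C)" for A B D
  proof -
    have "mTen (S C) (mTen (S C) A B) D \<in> S_ob C" "mTen (S C) A (mTen (S C) B D) \<in> S_ob C"
      using that by (simp_all only: S_simps(1) S_ten_in_S_ob)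
    then show ?thesis
      using that S_obD[of A] S_obD[of B] S_obD[of D] lunit_unit_assoc[of "snd A" "snd B" "snd D"]
      by (simp add: hom_def)
  qed
  show "mLu (S C) A \<in> hom (S C) (mTen (S C) (mUnit (S C)) A) A" if "A \<in> mOb (S C)" for A
    using that S_obD[of A] lunit_naturality[of "snd A", symmetric] S_ten_in_S_ob[OF S_unit_in_S_ob]
    by (simp add: hom_def)
  show "mRu (S C) A \<in> hom (S C) (mTen (S C) A (mUnit (S C))) A" if "A \<in> mOb (S C)" for A
    using that S_obD[of A] runit_naturality[of "snd A", symmetric] S_ten_in_S_ob[OF _ S_unit_in_S_ob]
    by (simp add: hom_def lunit_unit_eq_runit_unit)
qed

lemma in_Z_S: "in_Z (S C)"
  by (simp add: in_Z_iff_indiscrete monoidal_S indiscrete_S)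

lemma strong_monoidal_eps: "strong_monoidal (S C) C (eps C)"
  unfolding strong_monoidal_def is_functor_def
  by (intro conjI ballI impI monoidal_S monoidal)
    (auto simp: eps_def hom_def in_S_ob_iff tenA_idm iso_idm)

end

context symmetric_monoidal_category
begin

lemma symmetric_S: "symmetric (S C) (Ssym C s)"
proof (rule symmetric_if_indiscrete[OF monoidal_S indiscrete_S])
  fix A B
  assume "A \<in> mOb (S C)" "B \<in> mOb (S C)"
  then have A: "A \<in> S_ob C" and B: "B \<in> S_ob C"
    by simp_all
  have "(lunit I \<cdot> (snd B \<otimes> snd A)) \<cdot> s (fst A) (fst B) = (lunit I \<cdot> s I I) \<cdot> (snd A \<otimes> snd B)"
    using S_obD[OF A] S_obD[OF B] sym_naturality[of "snd A" "snd B"] by (simp add: comp_assoc)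
  moreover have "mTen (S C) A B \<in> S_ob C" "mTen (S C) B A \<in> S_ob C"
    using A B by (simp_all only: S_ten_in_S_ob)
  ultimately show "Ssym C s A B \<in> hom (S C) (mTen (S C) A B) (mTen (S C) B A)"
    using S_obD[OF A] S_obD[OF B] by (simp add: hom_def Ssym_def lunit_unit_comp_sym)
qed

lemma symmetric_strong_monoidal_eps: "symmetric_strong_monoidal (S C) (Ssym C s) C s (eps C)"
  unfolding symmetric_strong_monoidal_def
  using symmetric_S symmetric strong_monoidal_eps by (auto simp: eps_def Ssym_def S_obD)

end

locale functor_from_indiscrete = monoidal_category C
  for C :: "('o,'a) mcat" +
  fixes N :: "('p,'b) mcat" and F :: "('p,'b,'o,'a) smf"
  assumes indiscrete_N: "indiscrete N"
    and strong_F: "strong_monoidal N C F"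
begin

sublocale N: monoidal_category N
  using strong_F by unfold_locales (simp add: strong_monoidal_def)

lemma F_Ob [simp]: "X \<in> N.Ob \<Longrightarrow> fO F X \<in> Ob"
  and F_in_Ar [simp]: "f \<in> N.Ar \<Longrightarrow> fA F f \<in> Ar"
  and src_F [simp]: "f \<in> N.Ar \<Longrightarrow> src (fA F f) = fO F (N.src f)"
  and trg_F [simp]: "f \<in> N.Ar \<Longrightarrow> trg (fA F f) = fO F (N.trg f)"
  and F_comp: "f \<in> N.Ar \<Longrightarrow> g \<in> N.Ar \<Longrightarrow> N.trg f = N.src g \<Longrightarrow> fA F (N.comp g f) = fA F g \<cdot> fA F f"
  and F_idm: "X \<in> N.Ob \<Longrightarrow> fA F (N.idm X) = idm (fO F X)"
  and unit_F_in_Ar [simp]: "fPhi0 F \<in> Ar"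
  and src_unit_F [simp]: "src (fPhi0 F) = I"
  and trg_unit_F [simp]: "trg (fPhi0 F) = fO F N.I"
  and iso_unit_F: "iso C (fPhi0 F)"
  and ten_F_in_Ar [simp]: "X \<in> N.Ob \<Longrightarrow> Y \<in> N.Ob \<Longrightarrow> fPhi F X Y \<in> Ar"
  and src_ten_F [simp]: "X \<in> N.Ob \<Longrightarrow> Y \<in> N.Ob \<Longrightarrow> src (fPhi F X Y) = fO F X \<otimes>\<^sub>o fO F Y"
  and trg_ten_F [simp]: "X \<in> N.Ob \<Longrightarrow> Y \<in> N.Ob \<Longrightarrow> trg (fPhi F X Y) = fO F (N.ten X Y)"
  and ten_F_naturality: "f \<in> N.Ar \<Longrightarrow> g \<in> N.Ar \<Longrightarrow>
     fPhi F (N.trg f) (N.trg g) \<cdot> (fA F f \<otimes> fA F g) = fA F (N.tenA f g) \<cdot> fPhi F (N.src f) (N.src g)"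
  and F_lunit: "X \<in> N.Ob \<Longrightarrow>
     lunit (fO F X) = fA F (N.lunit X) \<cdot> (fPhi F N.I X \<cdot> (fPhi0 F \<otimes> idm (fO F X)))"
  using strong_F unfolding strong_monoidal_def is_functor_def hom_def by auto

lemma F_preserves_iso:
  assumes "iso N f"
  shows "iso C (fA F f)"
proof -
  obtain g where g: "g \<in> N.Ar" "N.src g = N.trg f" "N.trg g = N.src f"
    and "N.comp g f = N.idm (N.src f)" "N.comp f g = N.idm (N.trg f)"
    using assms unfolding iso_def hom_def by blast
  then have "fA F g \<cdot> fA F f = idm (fO F (N.src f))" "fA F f \<cdot> fA F g = idm (fO F (N.trg f))"
    using assms by (simp_all flip: F_comp add: F_idm)
  then show ?thesis
    using assms g by (intro isoI[where g = "fA F g"]) simp_all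
qed

definition to_unit :: "'p \<Rightarrow> 'b" where
  "to_unit X = (THE u. u \<in> hom N X N.I)"

lemma to_unit_in_hom: "X \<in> N.Ob \<Longrightarrow> to_unit X \<in> hom N X N.I"
  unfolding to_unit_def by (simp add: N.indiscrete_the_hom[OF indiscrete_N])

lemma to_unit_in_Ar [simp]: "X \<in> N.Ob \<Longrightarrow> to_unit X \<in> N.Ar"
  and src_to_unit [simp]: "X \<in> N.Ob \<Longrightarrow> N.src (to_unit X) = X"
  and trg_to_unit [simp]: "X \<in> N.Ob \<Longrightarrow> N.trg (to_unit X) = N.I"
  using to_unit_in_hom by (simp_all add: hom_def)

lemma to_unit_eqI: "X \<in> N.Ob \<Longrightarrow> u \<in> hom N X N.I \<Longrightarrow> to_unit X = u"
  using N.indiscrete_hom_eq[OF indiscrete_N] to_unit_in_hom by blast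

lemma to_unit_unit: "to_unit N.I = N.idm N.I"
  by (rule to_unit_eqI) (simp_all add: hom_def)

lemma to_unit_comp: "f \<in> N.Ar \<Longrightarrow> N.comp (to_unit (N.trg f)) f = to_unit (N.src f)"
  by (rule to_unit_eqI[symmetric]) (simp_all add: hom_def)

lemma to_unit_ten:
  "X \<in> N.Ob \<Longrightarrow> Y \<in> N.Ob \<Longrightarrow> to_unit (N.ten X Y) = N.comp (N.lunit N.I) (N.tenA (to_unit X) (to_unit Y))"
  by (rule to_unit_eqI) (simp_all add: hom_def)

definition lift_iso :: "'p \<Rightarrow> 'a" where
  "lift_iso X = inv_arr (fPhi0 F) \<cdot> fA F (to_unit X)"

lemma lift_iso_in_Ar [simp]: "X \<in> N.Ob \<Longrightarrow> lift_iso X \<in> Ar"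
  and src_lift_iso [simp]: "X \<in> N.Ob \<Longrightarrow> src (lift_iso X) = fO F X"
  and trg_lift_iso [simp]: "X \<in> N.Ob \<Longrightarrow> trg (lift_iso X) = I"
  by (simp_all add: lift_iso_def iso_unit_F)

lemma iso_lift_iso: "X \<in> N.Ob \<Longrightarrow> iso C (lift_iso X)"
  unfolding lift_iso_def
  by (intro iso_comp iso_inv_arr iso_unit_F F_preserves_iso N.indiscrete_iso[OF indiscrete_N])
    (simp_all add: iso_unit_F)

lemma lift_iso_naturality: "f \<in> N.Ar \<Longrightarrow> lift_iso (N.trg f) \<cdot> fA F f = lift_iso (N.src f)"
  unfolding lift_iso_def
  by (simp add: comp_assoc iso_unit_F flip: F_comp to_unit_comp)

lemma lift_iso_unit: "lift_iso N.I = inv_arr (fPhi0 F)"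
  by (simp add: lift_iso_def to_unit_unit F_idm iso_unit_F)

lemma inv_unit_F_lunit:
  "inv_arr (fPhi0 F) \<cdot> (fA F (N.lunit N.I) \<cdot> fPhi F N.I N.I)
   = lunit I \<cdot> (inv_arr (fPhi0 F) \<otimes> inv_arr (fPhi0 F))"
proof -
  let ?i = "inv_arr (fPhi0 F)" and ?FI = "fO F N.I"
  have "fA F (N.lunit N.I) \<cdot> fPhi F N.I N.I
      = (fA F (N.lunit N.I) \<cdot> (fPhi F N.I N.I \<cdot> (fPhi0 F \<otimes> idm ?FI))) \<cdot> (?i \<otimes> idm ?FI)"
    by (simp add: comp_assoc iso_unit_F tenA_idm flip: interchange)
  also have "\<dots> = lunit ?FI \<cdot> (?i \<otimes> idm ?FI)"
    by (simp add: F_lunit)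
  finally have "?i \<cdot> (fA F (N.lunit N.I) \<cdot> fPhi F N.I N.I) = (?i \<cdot> lunit ?FI) \<cdot> (?i \<otimes> idm ?FI)"
    by (simp add: comp_assoc iso_unit_F)
  also have "\<dots> = lunit I \<cdot> ((idm I \<otimes> ?i) \<cdot> (?i \<otimes> idm ?FI))"
    using lunit_naturality[of ?i, symmetric] by (simp add: iso_unit_F flip: comp_assoc)
  also have "\<dots> = lunit I \<cdot> (?i \<otimes> ?i)"
    by (simp add: iso_unit_F flip: interchange)
  finally show ?thesis .
qed

lemma lift_iso_ten:
  assumes X: "X \<in> N.Ob" and Y: "Y \<in> N.Ob"
  shows "lift_iso (N.ten X Y) \<cdot> fPhi F X Y = lunit I \<cdot> (lift_iso X \<otimes> lift_iso Y)"
proof -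
  let ?i = "inv_arr (fPhi0 F)" and ?uX = "fA F (to_unit X)" and ?uY = "fA F (to_unit Y)"
  have "lift_iso (N.ten X Y) \<cdot> fPhi F X Y
      = ?i \<cdot> (fA F (N.lunit N.I) \<cdot> (fA F (N.tenA (to_unit X) (to_unit Y)) \<cdot> fPhi F X Y))"
    using X Y by (simp add: lift_iso_def to_unit_ten F_comp comp_assoc iso_unit_F)
  also have "\<dots> = (?i \<cdot> (fA F (N.lunit N.I) \<cdot> fPhi F N.I N.I)) \<cdot> (?uX \<otimes> ?uY)"
    using X Y ten_F_naturality[of "to_unit X" "to_unit Y"] by (simp add: comp_assoc iso_unit_F)
  also have "\<dots> = lunit I \<cdot> ((?i \<cdot> ?uX) \<otimes> (?i \<cdot> ?uY))"
    using X Y by (simp add: inv_unit_F_lunit comp_assoc iso_unit_F flip: interchange)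
  finally show ?thesis
    by (simp add: lift_iso_def)
qed

definition lift_ob :: "'p \<Rightarrow> 'o \<times> 'a" where
  "lift_ob X = (fO F X, lift_iso X)"

definition S_lift :: "('p, 'b, 'o \<times> 'a, ('o \<times> 'a) \<times> 'a \<times> ('o \<times> 'a)) smf" where
  "S_lift = \<lparr>fO = lift_ob, fA = (\<lambda>f. (lift_ob (N.src f), fA F f, lift_ob (N.trg f))),
     fPhi = (\<lambda>X Y. (mTen (S C) (lift_ob X) (lift_ob Y), fPhi F X Y, lift_ob (N.ten X Y))),
     fPhi0 = (mUnit (S C), fPhi0 F, lift_ob N.I)\<rparr>"

lemma lift_ob_in_S_ob: "X \<in> N.Ob \<Longrightarrow> lift_ob X \<in> S_ob C"
  by (simp add: lift_ob_def in_S_ob_iff iso_lift_iso)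

lemma strong_monoidal_S_lift: "strong_monoidal N (S C) S_lift"
proof (rule strong_monoidal_into_indiscrete[OF N.monoidal monoidal_S indiscrete_S])
  show "fO S_lift X \<in> mOb (S C)" if "X \<in> N.Ob" for X
    using that by (simp add: S_lift_def lift_ob_in_S_ob)
  show "fA S_lift f \<in> hom (S C) (fO S_lift (N.src f)) (fO S_lift (N.trg f))" if "f \<in> N.Ar" for f
    using that lift_ob_in_S_ob[of "N.src f"] lift_ob_in_S_ob[of "N.trg f"]
    by (simp add: S_lift_def hom_def lift_ob_def lift_iso_naturality)
  show "fPhi0 S_lift \<in> hom (S C) (mUnit (S C)) (fO S_lift N.I)"
    using S_unit_in_S_ob lift_ob_in_S_ob[of N.I]
    by (simp add: S_lift_def hom_def lift_ob_def lift_iso_unit iso_unit_F)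
  show "fPhi S_lift X Y \<in> hom (S C) (mTen (S C) (fO S_lift X) (fO S_lift Y)) (fO S_lift (N.ten X Y))"
    if "X \<in> N.Ob" "Y \<in> N.Ob" for X Y
    using that S_ten_in_S_ob[OF lift_ob_in_S_ob lift_ob_in_S_ob] lift_ob_in_S_ob[of "N.ten X Y"]
    by (simp add: S_lift_def hom_def lift_ob_def lift_iso_ten)
qed

lemma eps_comp_S_lift: "smf_eq N (smf_comp C (eps C) S_lift) F"
  by (simp add: smf_eq_def smf_comp_def eps_def S_lift_def lift_ob_def)

text \<open>Uniqueness of the lift: the unit constraint of a lift G is a morphism of S(C) over
  fPhi0 F, which forces the structure iso of G(I) to be its inverse; G applied to the unique
  arrow X \<rightarrow> I then forces the structure iso of G(X).\<close>
lemma lift_unique_unit: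
  assumes "strong_monoidal N (S C) G" "smf_eq N (smf_comp C (eps C) G) F"
  shows "snd (fO G N.I) = inv_arr (fPhi0 F)"
proof -
  have G_unit: "fPhi0 G \<in> hom (S C) (mUnit (S C)) (fO G N.I)"
    using assms(1) unfolding strong_monoidal_def by blast
  then have "fst (snd (fPhi0 G)) = fPhi0 F"
    using assms(2) by (auto simp: smf_eq_def smf_comp_def eps_def hom_def)
  with G_unit have "snd (fO G N.I) \<cdot> fPhi0 F = idm I" "fst (fO G N.I) = fO F N.I"
    using assms(2) by (auto simp: hom_def smf_eq_def smf_comp_def eps_def)
  moreover have "fO G N.I \<in> S_ob C"
    using G_unit by (auto simp: hom_def split: prod.splits)
  ultimately show ?thesis
    using iso_cancel_right[OF iso_unit_F, of "snd (fO G N.I)" "inv_arr (fPhi0 F)"]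
    by (simp add: S_obD iso_unit_F)
qed

lemma lift_unique:
  assumes "strong_monoidal N (S C) G" "smf_eq N (smf_comp C (eps C) G) F" "X \<in> N.Ob"
  shows "fO G X = lift_ob X"
proof -
  have "fA G (to_unit X) \<in> hom (S C) (fO G X) (fO G N.I)"
    using assms(1,3) to_unit_in_Ar[OF assms(3)] unfolding strong_monoidal_def is_functor_def
    by (metis src_to_unit trg_to_unit)
  moreover have "fst (snd (fA G (to_unit X))) = fA F (to_unit X)" "fst (fO G X) = fO F X"
    using assms(2,3) by (simp_all add: smf_eq_def smf_comp_def eps_def)
  ultimately have "snd (fO G X) = lift_iso X" "fst (fO G X) = fO F X"
    using lift_unique_unit[OF assms(1,2)] by (auto simp: hom_def lift_iso_def)
  then show ?thesis
    by (simp add: lift_ob_def prod_eq_iff)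
qed

end

context monoidal_category
begin

lemma corefl_univ_S: "corefl_univ C (S C) (eps C) N F"
  unfolding corefl_univ_def
proof (rule impI, elim conjE, intro conjI allI impI)
  assume "in_Z N" "strong_monoidal N C F"
  then interpret functor_from_indiscrete C N F
    by unfold_locales (simp_all add: in_Z_iff_indiscrete)
  show "\<exists>G. strong_monoidal N (S C) G \<and> smf_eq N (smf_comp C (eps C) G) F"
    using strong_monoidal_S_lift eps_comp_S_lift by blast
  show "smf_eq N G G'"
    if "strong_monoidal N (S C) G \<and> smf_eq N (smf_comp C (eps C) G) F \<and>
        strong_monoidal N (S C) G' \<and> smf_eq N (smf_comp C (eps C) G') F" for G G'
    using that lift_unique by (intro smf_eq_into_indiscrete[OF _ _ indiscrete_S]) auto
qed

end

theorem proposition9p3: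
  fixes M :: "('o,'a) mcat" and s :: "'o \<Rightarrow> 'o \<Rightarrow> 'a"
  shows
   "(monoidal M \<longrightarrow>
       in_Z (R M) \<and> strong_monoidal M (R M) (eta M) \<and>
       (\<forall>(N :: ('p,'b) mcat) F. refl_univ M (R M) (eta M) N F) \<and>
       in_Z (S M) \<and> strong_monoidal (S M) M (eps M) \<and>
       (\<forall>(N :: ('q,'c) mcat) F. corefl_univ M (S M) (eps M) N F)) \<and>
    (symmetric M s \<longrightarrow>
       symmetric_strong_monoidal M s (R M) (Rsym M) (eta M) \<and>
       (\<forall>(N :: ('p,'b) mcat) t F. sym_refl_univ M (R M) (Rsym M) (eta M) s N t F) \<and>
       symmetric_strong_monoidal (S M) (Ssym M s) M s (eps M) \<and>
       (\<forall>(N :: ('q,'c) mcat) t F. sym_corefl_univ M (S M) (Ssym M s) (eps M) s N t F))"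
proof (intro conjI impI allI)
  assume M: "monoidal M"
  then interpret monoidal_category M
    by unfold_locales
  show "in_Z (R M)" "strong_monoidal M (R M) (eta M)" "\<And>N F. refl_univ M (R M) (eta M) N F"
    using M by (simp_all add: in_Z_R strong_monoidal_eta refl_univ_R)
  show "in_Z (S M)" "strong_monoidal (S M) M (eps M)" "\<And>N F. corefl_univ M (S M) (eps M) N F"
    by (simp_all add: in_Z_S strong_monoidal_eps corefl_univ_S)
next
  assume s: "symmetric M s"
  then have M: "monoidal M"
    by (simp add: symmetric_def)
  interpret symmetric_monoidal_category M s
    using M s by unfold_locales
  show "symmetric_strong_monoidal M s (R M) (Rsym M) (eta M)"
    using s symmetric_R[OF M] strong_monoidal_eta[OF M] indiscrete_R
    by (rule symmetric_strong_monoidal_into_indiscrete)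
  show "\<And>N t F. sym_refl_univ M (R M) (Rsym M) (eta M) s N t F"
    by (rule sym_refl_univ_if_refl_univ[OF symmetric_R[OF M] refl_univ_R])
  show "symmetric_strong_monoidal (S M) (Ssym M s) M s (eps M)"
    by (rule symmetric_strong_monoidal_eps)
  show "\<And>N t F. sym_corefl_univ M (S M) (Ssym M s) (eps M) s N t F"
    by (rule sym_corefl_univ_if_corefl_univ[OF symmetric_S indiscrete_S corefl_univ_S])
qed

end
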